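(* Let $X$ be a topological space with a Borel measure $\mu$, let $\mathcal A$ be the family of $G_\delta$ subsets of $X$ that are $\mu$-null, and let $\mathcal B=\{\{x\}:x\in X\}$. Then One has a winning strategy in $G_1(\mathscr N[\mathcal A],\neg\mathcal O(X,\mathcal B))$ if and only if $X$ is $\mu$-null, i.e., $\mu$ is the zero measure.
   Context: $\mathcal O(X,\mathcal B)$ with $\mathcal B$ the singletons is the set of open covers $\mathscr U$ of $X$ with $X\notin\mathscr U$. $\mathscr N[\mathcal A]=\{\mathscr N(A):A\in\mathcal A\}$ with $\mathscr N(A)$ the set of open $U\neq X$ with $A\subseteq U$; in $G_1(\mathscr N[\mathcal A],\neg\mathcal O(X,\mathcal B))$, at each inning $n\in\omega$ One plays some $A_n\in\mathcal A$, Two answers with an open $U_n\supseteq A_n$, $U_n\neq X$, and One wins iff $\{U_n:n\in\omega\}\in\mathcal O(X,\mathcal B)$. A strategy for One maps finite sequences of Two's moves to moves; it is winning if One wins every play following it. *)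

theory Defs
  imports "HOL-Analysis.Analysis" "HOL-Probability.Probability"
begin

definition borel_measure_on :: "'a topology \<Rightarrow> 'a measure \<Rightarrow> bool" where
  "borel_measure_on X M \<longleftrightarrow> space M = topspace X \<and>
     sets M = sigma_sets (topspace X) {U. openin X U}"

definition null_gdelta :: "'a topology \<Rightarrow> 'a measure \<Rightarrow> 'a set set" where
  "null_gdelta X M = {A. gdelta_in X A \<and> A \<in> null_sets M}"

text \<open>O(X, B) with B the singletons: open covers U of X with X not in U.\<close>
definition open_covers_nontrivial :: "'a topology \<Rightarrow> 'a set set set" where
  "open_covers_nontrivial X =
     {\<U>. (\<forall>U\<in>\<U>. openin X U) \<and> \<Union>\<U> = topspace X \<and> topspace X \<notin> \<U>}"

definition nbhd_moves :: "'a topology \<Rightarrow> 'a set \<Rightarrow> 'a set set" where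
  "nbhd_moves X A = {U. openin X U \<and> U \<noteq> topspace X \<and> A \<subseteq> U}"

text \<open>A strategy for One in G_1(N[A], not O(X,B)) maps the finite list of Two's
  previous moves to One's next move, an element of the family A.\<close>
definition one_winning_strategy ::
  "'a topology \<Rightarrow> 'a set set \<Rightarrow> ('a set list \<Rightarrow> 'a set) \<Rightarrow> bool" where
  "one_winning_strategy X \<A> \<sigma> \<longleftrightarrow>
     (\<forall>s. \<sigma> s \<in> \<A>) \<and>
     (\<forall>U :: nat \<Rightarrow> 'a set.
        (\<forall>n. U n \<in> nbhd_moves X (\<sigma> (map U [0..<n]))) \<longrightarrow>
        range U \<in> open_covers_nontrivial X)"

definition one_has_winning_strategy :: "'a topology \<Rightarrow> 'a set set \<Rightarrow> bool" where
  "one_has_winning_strategy X \<A> \<longleftrightarrow> (\<exists>\<sigma>. one_winning_strategy X \<A> \<sigma>)"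

end

theory Submission
  imports Defs
begin

text \<open>If \<open>X\<close> is null, One wins by playing \<open>X\<close> itself: Two has no legal answer.
  Conversely, write each of One's moves \<open>A\<close> as \<open>\<Inter>\<^sub>k V A k\<close> with \<open>V A k\<close> open, and
  let Two answer only with sets \<open>V A k\<close>.  The plays of this kind are indexed by finite
  lists of naturals, so One's strategy uses only countably many null sets along them.
  A point \<open>x\<close> outside all of these can be avoided by Two forever (at each move \<open>A\<close>
  some \<open>V A k\<close> misses \<open>x\<close>), so against a winning strategy no such point exists and
  \<open>X\<close> is covered by countably many null sets.\<close>

lemma nbhd_moves_topspace [simp]: "nbhd_moves X (topspace X) = {}"
  by (auto simp: nbhd_moves_def dest: openin_subset)

lemma one_winning_strategy_topspace:
  assumes "topspace X \<in> \<A>"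
  shows "one_winning_strategy X \<A> (\<lambda>_. topspace X)"
  using assms by (simp add: one_winning_strategy_def)

definition indexed_play ::
    "('a set list \<Rightarrow> 'a set) \<Rightarrow> ('a set \<Rightarrow> nat \<Rightarrow> 'a set) \<Rightarrow> nat list \<Rightarrow> 'a set list" where
  "indexed_play \<sigma> V ks = foldl (\<lambda>ms k. ms @ [V (\<sigma> ms) k]) [] ks"

lemma indexed_play_Nil [simp]: "indexed_play \<sigma> V [] = []"
  by (simp add: indexed_play_def)

lemma indexed_play_snoc [simp]:
  "indexed_play \<sigma> V (ks @ [k]) = indexed_play \<sigma> V ks @ [V (\<sigma> (indexed_play \<sigma> V ks)) k]"
  by (simp add: indexed_play_def)

lemma winning_strategy_indexed_plays_cover:
  assumes \<sigma>: "one_winning_strategy X \<A> \<sigma>"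
    and V_open: "\<And>A k. A \<in> \<A> \<Longrightarrow> openin X (V A k)"
    and V_Inter: "\<And>A. A \<in> \<A> \<Longrightarrow> \<Inter>(range (V A)) = A"
  shows "topspace X \<subseteq> (\<Union>ks. \<sigma> (indexed_play \<sigma> V ks))"
proof
  fix x assume x: "x \<in> topspace X"
  show "x \<in> (\<Union>ks. \<sigma> (indexed_play \<sigma> V ks))"
  proof (rule ccontr)
    assume "x \<notin> (\<Union>ks. \<sigma> (indexed_play \<sigma> V ks))"
    then have x_notin_move: "x \<notin> \<sigma> (indexed_play \<sigma> V ks)" for ks
      by blast
    have \<sigma>_move: "\<sigma> ms \<in> \<A>" for ms
      using \<sigma> by (simp add: one_winning_strategy_def)
    define avoid where "avoid ms = (SOME k. x \<notin> V (\<sigma> ms) k)" for ms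
    define ks where "ks = rec_nat [] (\<lambda>_ ks. ks @ [avoid (indexed_play \<sigma> V ks)])"
    define U where "U n = V (\<sigma> (indexed_play \<sigma> V (ks n))) (avoid (indexed_play \<sigma> V (ks n)))"
      for n
    have history: "map U [0..<n] = indexed_play \<sigma> V (ks n)" for n
      by (induction n) (simp_all add: ks_def U_def)
    have x_notin_U: "x \<notin> U n" for n
    proof -
      have "\<exists>k. x \<notin> V (\<sigma> (indexed_play \<sigma> V (ks n))) k"
        using x_notin_move V_Inter[OF \<sigma>_move] by blast
      then show ?thesis
        unfolding U_def avoid_def by (rule someI_ex)
    qed
    have move_subset_V: "\<sigma> ms \<subseteq> V (\<sigma> ms) k" for ms k
      using V_Inter[OF \<sigma>_move, of ms] by (metis INT_lower UNIV_I)
    have "U n \<in> nbhd_moves X (\<sigma> (map U [0..<n]))" for n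
      using V_open[OF \<sigma>_move] move_subset_V x x_notin_U[of n]
      by (auto simp: nbhd_moves_def history U_def)
    then have "\<Union>(range U) = topspace X"
      using \<sigma> by (simp add: one_winning_strategy_def open_covers_nontrivial_def)
    then show False
      using x x_notin_U by blast
  qed
qed

lemma winning_strategy_gdelta_countable_cover:
  assumes \<sigma>: "one_winning_strategy X \<A> \<sigma>"
    and gdelta: "\<And>A. A \<in> \<A> \<Longrightarrow> gdelta_in X A"
  shows "\<exists>\<C> \<subseteq> \<A>. countable \<C> \<and> topspace X \<subseteq> \<Union>\<C>"
proof -
  have "\<exists>C :: nat \<Rightarrow> 'a set. (\<forall>k. openin X (C k)) \<and> \<Inter>(range C) = A" if "A \<in> \<A>" for A
    using gdelta[OF that] unfolding gdelta_in_descending by blast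
  then obtain V :: "'a set \<Rightarrow> nat \<Rightarrow> 'a set"
    where V: "\<forall>A\<in>\<A>. (\<forall>k. openin X (V A k)) \<and> \<Inter>(range (V A)) = A"
    by metis
  let ?\<C> = "range (\<lambda>ks. \<sigma> (indexed_play \<sigma> V ks))"
  have "?\<C> \<subseteq> \<A>"
    using \<sigma> by (simp add: one_winning_strategy_def image_subset_iff)
  moreover have "countable ?\<C>"
    by simp
  moreover have "topspace X \<subseteq> \<Union>?\<C>"
    by (intro winning_strategy_indexed_plays_cover[OF \<sigma>]) (simp_all add: V)
  ultimately show ?thesis
    by blast
qed

theorem mainTheorem19:
  fixes X :: "'a topology" and M :: "'a measure"
  assumes "borel_measure_on X M"
  shows "one_has_winning_strategy X (null_gdelta X M) \<longleftrightarrow> emeasure M (topspace X) = 0"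
proof -
  have topspace_sets: "topspace X \<in> sets M"
    using assms sets.top[of M] by (simp add: borel_measure_on_def)
  show ?thesis
  proof
    assume "one_has_winning_strategy X (null_gdelta X M)"
    then obtain \<sigma> where \<sigma>: "one_winning_strategy X (null_gdelta X M) \<sigma>"
      by (auto simp: one_has_winning_strategy_def)
    obtain \<C> where \<C>: "\<C> \<subseteq> null_gdelta X M" "countable \<C>" "topspace X \<subseteq> \<Union>\<C>"
      using winning_strategy_gdelta_countable_cover[OF \<sigma>] by (auto simp: null_gdelta_def)
    have "\<Union>\<C> \<in> null_sets M"
      using null_sets_UN'[of \<C> id M] \<C> by (auto simp: null_gdelta_def)
    then have "topspace X \<in> null_sets M"
      using topspace_sets \<C>(3) by (rule null_sets_subset)
    then show "emeasure M (topspace X) = 0"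
      by auto
  next
    assume "emeasure M (topspace X) = 0"
    then have "topspace X \<in> null_gdelta X M"
      using topspace_sets by (simp add: null_gdelta_def null_setsI)
    then show "one_has_winning_strategy X (null_gdelta X M)"
      using one_winning_strategy_topspace by (auto simp: one_has_winning_strategy_def)
  qed
qed

end
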